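(* Let $n\ge 5$ and $M\ge1$ be integers, $U=\{0,1,\ldots,M-1\}$, and let $\phi:\binom{U}{2}\to\{\text{red},\text{blue}\}$ be a $2$-coloring such that every $n$-element subset of $U$ contains three elements $x<y<z$ with $\phi(x,y)=\phi(y,z)\ne\phi(x,z)$. Let $H=H_\phi$ be the $4$-uniform hypergraph on $V=\{0,\ldots,2^M-1\}$ defined below, and let $Q=(v_1<v_2<\cdots<v_m)$ be an independent set of $H$, with $\delta_i=\delta(v_i,v_{i+1})$ for $1\le i\le m-1$. Then there do not exist indices $i_1<i_2<\cdots<i_n$ in $\{1,\ldots,m-1\}$ such that $\delta_{i_1},\ldots,\delta_{i_n}$ is strictly increasing or strictly decreasing and such that for all $1\le a<b<c\le n$ there exist $u_1<u_2<u_3<u_4$ in $Q$ with $(\delta(u_1,u_2),\delta(u_2,u_3),\delta(u_3,u_4))=(\delta_{i_a},\delta_{i_b},\delta_{i_c})$.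
   Context: Every $a\in V=\{0,\ldots,2^M-1\}$ is written in binary as $a=\sum_{i=0}^{M-1}a(i)2^i$ with $a(i)\in\{0,1\}$. For $a\ne b$ in $V$, $\delta(a,b)$ denotes the largest index $i$ with $a(i)\ne b(i)$; thus $\delta(a,b)\in U$. For a pair $\{x,y\}$ of distinct elements of $U$ we write $\phi(x,y)=\phi(y,x)$ for its color. For a $4$-tuple $v_1<v_2<v_3<v_4$ of $V$, set $\delta_i=\delta(v_i,v_{i+1})$ for $i=1,2,3$. The $4$-tuple $\{v_1,v_2,v_3,v_4\}$ is an edge of $H$ if and only if one of the following holds: (i) $\delta_1<\delta_2<\delta_3$ or $\delta_1>\delta_2>\delta_3$, and $\phi(\delta_1,\delta_2)=\phi(\delta_2,\delta_3)\ne\phi(\delta_1,\delta_3)$; (ii) $\delta_1>\delta_2<\delta_3$, $\delta_1>\delta_3$, and $\phi(\delta_1,\delta_2)\ne\phi(\delta_2,\delta_3)$; (iii) $\delta_1>\delta_2<\delta_3$, $\delta_1<\delta_3$, and $\phi(\delta_1,\delta_2)=\phi(\delta_1,\delta_3)=\phi(\delta_2,\delta_3)$. An independent set of $H$ is a set of vertices containing no edge of $H$. *)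

theory Defs
  imports Main
begin

text \<open>Colours red/blue are represented by bool; the colouring phi is a function on 2-element
  subsets of U, evaluated at {x, y}.\<close>

definition delta :: "nat \<Rightarrow> nat \<Rightarrow> nat \<Rightarrow> nat" where
  "delta M a b = (GREATEST i. i < M \<and> bit a i \<noteq> bit b i)"

definition is_edge :: "nat \<Rightarrow> (nat set \<Rightarrow> bool) \<Rightarrow> nat \<Rightarrow> nat \<Rightarrow> nat \<Rightarrow> nat \<Rightarrow> bool" where
  "is_edge M phi v1 v2 v3 v4 \<longleftrightarrow>
     (let d1 = delta M v1 v2; d2 = delta M v2 v3; d3 = delta M v3 v4 in
       (((d1 < d2 \<and> d2 < d3) \<or> (d1 > d2 \<and> d2 > d3)) \<and>
          phi {d1, d2} = phi {d2, d3} \<and> phi {d2, d3} \<noteq> phi {d1, d3})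
     \<or> (d1 > d2 \<and> d2 < d3 \<and> d1 > d3 \<and> phi {d1, d2} \<noteq> phi {d2, d3})
     \<or> (d1 > d2 \<and> d2 < d3 \<and> d1 < d3 \<and> phi {d1, d2} = phi {d1, d3} \<and> phi {d1, d3} = phi {d2, d3}))"

definition independent_H :: "nat \<Rightarrow> (nat set \<Rightarrow> bool) \<Rightarrow> nat set \<Rightarrow> bool" where
  "independent_H M phi Q \<longleftrightarrow> Q \<subseteq> {..<2^M} \<and>
     (\<forall>v1\<in>Q. \<forall>v2\<in>Q. \<forall>v3\<in>Q. \<forall>v4\<in>Q. v1 < v2 \<and> v2 < v3 \<and> v3 < v4 \<longrightarrow> \<not> is_edge M phi v1 v2 v3 v4)"

end

theory Submission
  imports Defs
begin

text \<open>The selected deltas are \<open>n\<close> distinct elements of \<open>U\<close>, so the colouring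
  hypothesis yields \<open>x < y < z\<close> among them with \<open>\<phi>(x,y) = \<phi>(y,z) \<noteq> \<phi>(x,z)\<close>. By monotonicity
  of the subsequence, \<open>x, y, z\<close> occur at indices in increasing order (or all reversed), so
  the assumed realisation by \<open>u\<^sub>1 < u\<^sub>2 < u\<^sub>3 < u\<^sub>4\<close> in \<open>Q\<close> has delta sequence \<open>(x,y,z)\<close> or
  \<open>(z,y,x)\<close>. That is an edge of type (i), contradicting the independence of \<open>Q\<close>.\<close>

lemma delta_less:
  fixes a b M :: nat
  assumes "a < 2 ^ M" "b < 2 ^ M" "a \<noteq> b"
  shows "delta M a b < M"
proof -
  obtain i where i: "bit a i \<noteq> bit b i"
    using \<open>a \<noteq> b\<close> bit_eq_iff by blast
  have "i < M"
    using i take_bit_nat_eq_self[OF assms(1)] take_bit_nat_eq_self[OF assms(2)]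
    by (metis bit_take_bit_iff)
  define differ where "differ = (\<lambda>j. j < M \<and> bit a j \<noteq> bit b j)"
  with i \<open>i < M\<close> have "differ i" by simp
  then have "differ (Greatest differ)"
    by (rule GreatestI_nat[where b = M]) (simp add: differ_def)
  moreover have "delta M a b = Greatest differ" unfolding delta_def differ_def ..
  ultimately show ?thesis unfolding differ_def by simp
qed

lemma is_edge_if_bad_triangle:
  assumes "x < y" "y < z" "phi {x, y} = phi {y, z}" "phi {y, z} \<noteq> phi {x, z}"
    and "(delta M u1 u2, delta M u2 u3, delta M u3 u4) \<in> {(x, y, z), (z, y, x)}"
  shows "is_edge M phi u1 u2 u3 u4"
  using assms by (auto simp: is_edge_def Let_def insert_commute)

lemma strict_mono_or_antimono_on_ordered_preimage:
  fixes f :: "'a::linorder \<Rightarrow> 'b::linorder"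
  assumes f: "strict_mono_on A f \<or> strict_antimono_on A f"
    and "x \<in> f ` A" "y \<in> f ` A" "z \<in> f ` A" "x < y" "y < z"
  obtains a b c where "a \<in> A" "b \<in> A" "c \<in> A" "a < b" "b < c"
    "(f a, f b, f c) \<in> {(x, y, z), (z, y, x)}"
proof -
  obtain p q r where pqr: "p \<in> A" "q \<in> A" "r \<in> A" "x = f p" "y = f q" "z = f r"
    using assms(2-4) by blast
  from f show thesis
  proof
    assume "strict_mono_on A f"
    then have "p < q" "q < r"
      using pqr \<open>x < y\<close> \<open>y < z\<close> strict_mono_on_less by blast+
    then show thesis using that pqr by blast
  next
    assume anti: "strict_antimono_on A f"
    have "s < t" if "s \<in> A" "t \<in> A" "f t < f s" for s t
      using monotone_onD[OF anti, of s t] monotone_onD[OF anti, of t s] that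
      by (cases s t rule: linorder_cases) auto
    then have "r < q" "q < p"
      using pqr \<open>x < y\<close> \<open>y < z\<close> by blast+
    then show thesis using that pqr by blast
  qed
qed

lemma strict_mono_or_antimono_on_card_image:
  fixes f :: "'a::linorder \<Rightarrow> 'b::order"
  assumes "strict_mono_on A f \<or> strict_antimono_on A f"
  shows "card (f ` A) = card A"
  using assms by (auto intro: card_image strict_mono_on_imp_inj_on simp: strict_antimono_iff_antimono)

lemma delta_consecutive_less:
  assumes "strict_mono_on {1..m} v" "v ` {1..m} \<subseteq> {..<2 ^ M}" "1 \<le> i" "i < m"
  shows "delta M (v i) (v (Suc i)) < M"
proof -
  have i: "i \<in> {1..m}" "Suc i \<in> {1..m}" using assms(3,4) by auto
  then have "v i < v (Suc i)" by (auto intro: strict_mono_onD[OF assms(1)])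
  moreover have "v i < 2 ^ M" "v (Suc i) < 2 ^ M"
    using i assms(2) by (meson image_subset_iff lessThan_iff)+
  ultimately show ?thesis by (intro delta_less) auto
qed

theorem lemma3p2:
  fixes n M m :: nat and phi :: "nat set \<Rightarrow> bool" and v :: "nat \<Rightarrow> nat"
  assumes "n \<ge> 5" and "M \<ge> 1"
    and col: "\<forall>S. S \<subseteq> {..<M} \<and> card S = n \<longrightarrow>
               (\<exists>x\<in>S. \<exists>y\<in>S. \<exists>z\<in>S. x < y \<and> y < z \<and>
                  phi {x, y} = phi {y, z} \<and> phi {y, z} \<noteq> phi {x, z})"
    and v_mono: "strict_mono_on {1..m} v"
    and indep: "independent_H M phi (v ` {1..m})"
  shows "\<not> (\<exists>idx :: nat \<Rightarrow> nat.
            strict_mono_on {1..n} idx \<and>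
            (\<forall>k\<in>{1..n}. 1 \<le> idx k \<and> idx k \<le> m - 1) \<and>
            ((\<forall>j\<in>{1..n}. \<forall>k\<in>{1..n}. j < k \<longrightarrow>
                 delta M (v (idx j)) (v (Suc (idx j))) < delta M (v (idx k)) (v (Suc (idx k)))) \<or>
             (\<forall>j\<in>{1..n}. \<forall>k\<in>{1..n}. j < k \<longrightarrow>
                 delta M (v (idx j)) (v (Suc (idx j))) > delta M (v (idx k)) (v (Suc (idx k))))) \<and>
            (\<forall>a b c. 1 \<le> a \<and> a < b \<and> b < c \<and> c \<le> n \<longrightarrow>
               (\<exists>u1\<in>v ` {1..m}. \<exists>u2\<in>v ` {1..m}. \<exists>u3\<in>v ` {1..m}. \<exists>u4\<in>v ` {1..m}.
                  u1 < u2 \<and> u2 < u3 \<and> u3 < u4 \<and>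
                  delta M u1 u2 = delta M (v (idx a)) (v (Suc (idx a))) \<and>
                  delta M u2 u3 = delta M (v (idx b)) (v (Suc (idx b))) \<and>
                  delta M u3 u4 = delta M (v (idx c)) (v (Suc (idx c))))))"
  (is "\<not> (\<exists>idx. ?idx_mono idx \<and> ?range idx \<and> ?monotone idx \<and> ?realised idx)")
proof
  assume "\<exists>idx. ?idx_mono idx \<and> ?range idx \<and> ?monotone idx \<and> ?realised idx"
  then obtain idx where rng: "?range idx" and mono: "?monotone idx" and realised: "?realised idx"
    by blast
  define D where "D k = delta M (v (idx k)) (v (Suc (idx k)))" for k
  define Q where "Q = v ` {1..m}"
  have Q_indep: "independent_H M phi Q" using indep unfolding Q_def .
  have D_mono: "strict_mono_on {1..n} D \<or> strict_antimono_on {1..n} D"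
    using mono unfolding D_def monotone_on_def .
  have Q_bound: "Q \<subseteq> {..<2 ^ M}" using Q_indep unfolding independent_H_def by blast
  have "D k < M" if "k \<in> {1..n}" for k
  proof -
    have "1 \<le> idx k" "idx k < m" using rng that by fastforce+
    with Q_bound show ?thesis unfolding D_def Q_def by (intro delta_consecutive_less[OF v_mono])
  qed
  then have "D ` {1..n} \<subseteq> {..<M}" by auto
  moreover have "card (D ` {1..n}) = n"
    using strict_mono_or_antimono_on_card_image[OF D_mono] by simp
  ultimately have "\<exists>x\<in>D ` {1..n}. \<exists>y\<in>D ` {1..n}. \<exists>z\<in>D ` {1..n}. x < y \<and> y < z \<and>
      phi {x, y} = phi {y, z} \<and> phi {y, z} \<noteq> phi {x, z}"
    by (intro col[rule_format] conjI)
  then obtain x y z where xyz: "x \<in> D ` {1..n}" "y \<in> D ` {1..n}" "z \<in> D ` {1..n}"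
    and bad: "x < y" "y < z" "phi {x, y} = phi {y, z}" "phi {y, z} \<noteq> phi {x, z}"
    by (elim bexE conjE) (rule that)
  obtain a b c where "a \<in> {1..n}" "b \<in> {1..n}" "c \<in> {1..n}" "a < b" "b < c"
    and abc: "(D a, D b, D c) \<in> {(x, y, z), (z, y, x)}"
    using D_mono xyz \<open>x < y\<close> \<open>y < z\<close> by (rule strict_mono_or_antimono_on_ordered_preimage)
  then have "1 \<le> a \<and> a < b \<and> b < c \<and> c \<le> n" by auto
  then have "\<exists>u1\<in>Q. \<exists>u2\<in>Q. \<exists>u3\<in>Q. \<exists>u4\<in>Q. u1 < u2 \<and> u2 < u3 \<and> u3 < u4 \<and>
      delta M u1 u2 = D a \<and> delta M u2 u3 = D b \<and> delta M u3 u4 = D c"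
    unfolding D_def Q_def by (rule realised[rule_format])
  then obtain u1 u2 u3 u4 where u: "u1 \<in> Q" "u2 \<in> Q" "u3 \<in> Q" "u4 \<in> Q"
    "u1 < u2" "u2 < u3" "u3 < u4"
    and "delta M u1 u2 = D a" "delta M u2 u3 = D b" "delta M u3 u4 = D c"
    by (elim bexE conjE) (rule that)
  with abc bad have "is_edge M phi u1 u2 u3 u4"
    by (intro is_edge_if_bad_triangle) auto
  with u Q_indep show False unfolding independent_H_def by blast
qed

end
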